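(* Suppose that for each topological space $X$ a family $\mathbb{A}_X\subseteq\mathcal{P}(X)$ is given such that (a) $\mathbb{A}_X$ is an ideal; (b) if $Z\subseteq X$ then $\mathbb{A}_Z\subseteq\mathbb{A}_X$; (c) if $U\subseteq X$ is open then $\mathbb{A}_U=\{A\cap U:A\in\mathbb{A}_X\}$. If $X=Y\cup Z$ where the subspaces $Y$ and $Z$ are both $\mathbb{A}$-separable, then $X$ is $\mathbb{A}$-separable.
   Context: Given such an assignment $X\mapsto\mathbb{A}_X$, a space $X$ is $\mathbb{A}$-separable if for every sequence $\{D_n:n<\omega\}$ of dense subsets of $X$ there are sets $A_n\in\mathcal{P}(D_n)\cap\mathbb{A}_X$ ($n<\omega$) such that $\bigcup_{n<\omega}A_n$ is dense in $X$. *)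

theory Defs
  imports "HOL-Analysis.Analysis"
begin

definition is_ideal_on :: "'a topology \<Rightarrow> 'a set set \<Rightarrow> bool" where
  "is_ideal_on X I \<longleftrightarrow>
     I \<subseteq> Pow (topspace X) \<and> {} \<in> I \<and>
     (\<forall>A\<in>I. \<forall>B. B \<subseteq> A \<longrightarrow> B \<in> I) \<and>
     (\<forall>A\<in>I. \<forall>B\<in>I. A \<union> B \<in> I)"

definition dense_in :: "'a topology \<Rightarrow> 'a set \<Rightarrow> bool" where
  "dense_in X D \<longleftrightarrow> D \<subseteq> topspace X \<and> X closure_of D = topspace X"

definition A_separable :: "('a topology \<Rightarrow> 'a set set) \<Rightarrow> 'a topology \<Rightarrow> bool" where
  "A_separable \<AA> X \<longleftrightarrow>
     (\<forall>D :: nat \<Rightarrow> 'a set. (\<forall>n. dense_in X (D n)) \<longrightarrow>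
        (\<exists>A :: nat \<Rightarrow> 'a set. (\<forall>n. A n \<subseteq> D n \<and> A n \<in> \<AA> X) \<and>
            dense_in X (\<Union>n. A n)))"

end

theory Submission
  imports Defs
begin

(* Let D n be dense and let T n, the union of the D m with m \<ge> n, be its decreasing
   dense tails. Inside a side W the set (W \<inter> T n) \<union> (W - cl (W \<inter> T n)) is dense, so
   separability of W yields members B n of the ideal with union dense in W; on an open set
   lying in every closure cl (W \<inter> T n), the points of B n are points of T n. Every nonempty
   open set contains a nonempty open set of this kind for Y or for Z: if it is not inside some
   cl (Y \<inter> T j), the part outside lies in every cl (Z \<inter> T p). A point of B n \<inter> T n lies in
   some D m with m \<ge> n, so it is caught by the finite union of B 0, ..., B m intersected
   with D m. Only properties (a) and (b) of \<AA> are needed. *)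

lemma is_ideal_on_finite_UN:
  assumes "is_ideal_on X I" "finite F" "\<And>i. i \<in> F \<Longrightarrow> f i \<in> I"
  shows "(\<Union>i\<in>F. f i) \<in> I"
  using assms(2,3)
proof (induction F rule: finite_induct)
  case empty then show ?case using assms(1) by (simp add: is_ideal_on_def)
next
  case (insert x F) then show ?case using assms(1) by (simp add: is_ideal_on_def)
qed

lemma dense_in_subtopology_Int_Un_diff_closure:
  assumes "W \<subseteq> topspace X"
  shows "dense_in (subtopology X W) ((W \<inter> S) \<union> (W - X closure_of (W \<inter> S)))"
proof -
  let ?E = "(W \<inter> S) \<union> (W - X closure_of (W \<inter> S))"
  have E: "?E \<subseteq> W" by blast
  have "W \<subseteq> X closure_of ?E"
  proof
    fix y assume y: "y \<in> W"
    show "y \<in> X closure_of ?E"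
    proof (cases "y \<in> X closure_of (W \<inter> S)")
      case True then show ?thesis using closure_of_mono[of "W \<inter> S" ?E X] by blast
    next
      case False then have "y \<in> ?E" using y by blast
      then show ?thesis using closure_of_subset[of ?E X] E assms by blast
    qed
  qed
  then show ?thesis using E assms
    unfolding dense_in_def closure_of_subtopology_open[of X W ?E, OF disjI2[OF E]]
    by auto
qed

lemma dense_in_closure_of_tail:
  fixes D :: "nat \<Rightarrow> 'a set"
  assumes "\<And>n. dense_in X (D n)"
  shows "X closure_of (\<Union>m\<in>{n..}. D m) = topspace X"
proof -
  have "X closure_of D n \<subseteq> X closure_of (\<Union>m\<in>{n..}. D m)"
    by (intro closure_of_mono UN_upper) simp
  then show ?thesis using assms[of n] closure_of_subset_topspace by (fastforce simp: dense_in_def)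
qed

lemma A_separable_subtopology_traces:
  fixes T :: "nat \<Rightarrow> 'a set"
  assumes sep: "A_separable \<AA> (subtopology X W)" and W: "W \<subseteq> topspace X"
  obtains B where "\<And>n. B n \<in> \<AA> (subtopology X W)"
    and "\<And>V. \<lbrakk>openin X V; V \<noteq> {}; \<forall>p. V \<subseteq> X closure_of (W \<inter> T p)\<rbrakk> \<Longrightarrow> \<exists>n. V \<inter> B n \<inter> T n \<noteq> {}"
proof -
  let ?E = "\<lambda>n. (W \<inter> T n) \<union> (W - X closure_of (W \<inter> T n))"
  have "\<forall>n. dense_in (subtopology X W) (?E n)"
    by (intro allI dense_in_subtopology_Int_Un_diff_closure[OF W])
  then obtain B where B: "\<forall>n. B n \<subseteq> ?E n \<and> B n \<in> \<AA> (subtopology X W)"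
    and dense: "dense_in (subtopology X W) (\<Union>n. B n)"
    using sep[unfolded A_separable_def, rule_format, of ?E] by blast
  have "\<exists>n. V \<inter> B n \<inter> T n \<noteq> {}"
    if V: "openin X V" "V \<noteq> {}" and cl: "\<forall>p. V \<subseteq> X closure_of (W \<inter> T p)" for V
  proof -
    have "V \<inter> (W \<inter> T 0) \<noteq> {}"
      using cl V openin_Int_closure_of_eq_empty[OF V(1)] by blast
    then obtain w where w: "w \<in> V" "w \<in> W" by blast
    have "subtopology X W closure_of (\<Union>n. B n) = W"
      using dense W unfolding dense_in_def by auto
    then have "W \<subseteq> X closure_of (\<Union>n. B n)"
      unfolding closure_of_subtopology using closure_of_mono[of "W \<inter> (\<Union>n. B n)"] by blast
    then have "w \<in> X closure_of (\<Union>n. B n)" using w by blast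
    then obtain n y where "y \<in> V" "y \<in> B n"
      using w(1) V(1) unfolding in_closure_of by blast
    moreover have "y \<in> X closure_of (W \<inter> T n)" using cl \<open>y \<in> V\<close> by blast
    ultimately have "y \<in> V \<inter> B n \<inter> T n" using B by blast
    then show ?thesis by blast
  qed
  then show ?thesis using that B by blast
qed

lemma openin_contains_openin_in_closures_of_one_side:
  assumes cover: "topspace X = Y \<union> Z" and dec: "decseq T"
    and dense: "\<And>p. X closure_of T p = topspace X"
    and U: "openin X U" "U \<noteq> {}"
  obtains V where "openin X V" "V \<noteq> {}" "V \<subseteq> U"
    "(\<forall>p. V \<subseteq> X closure_of (Y \<inter> T p)) \<or> (\<forall>p. V \<subseteq> X closure_of (Z \<inter> T p))"
proof (cases "\<forall>p. U \<subseteq> X closure_of (Y \<inter> T p)")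
  case True
  then show ?thesis using that U by blast
next
  case False
  then obtain j where j: "\<not> U \<subseteq> X closure_of (Y \<inter> T j)" by blast
  define V where "V = U - X closure_of (Y \<inter> T j)"
  have V: "openin X V" "V \<noteq> {}" "V \<subseteq> U"
    using U j by (auto simp: V_def)
  have "V \<subseteq> X closure_of (Z \<inter> T p)" for p
  proof -
    let ?q = "max p j"
    have "topspace X = X closure_of (topspace X \<inter> T ?q)"
      using dense closure_of_restrict by metis
    also have "\<dots> = X closure_of (Y \<inter> T ?q) \<union> X closure_of (Z \<inter> T ?q)"
      unfolding cover Int_Un_distrib2 closure_of_Un ..
    also have "\<dots> \<subseteq> X closure_of (Y \<inter> T j) \<union> X closure_of (Z \<inter> T p)"
      by (intro Un_mono closure_of_mono Int_mono order_refl decseqD[OF dec]) simp_all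
    finally have "topspace X \<subseteq> X closure_of (Y \<inter> T j) \<union> X closure_of (Z \<inter> T p)" .
    then show ?thesis using openin_subset[OF V(1)] by (auto simp: V_def)
  qed
  then show ?thesis using that V by blast
qed

lemma openin_meets_traces_of_cover:
  assumes cover: "topspace X = Y \<union> Z" and dec: "decseq T"
    and dense: "\<And>p. X closure_of T p = topspace X"
    and hitY: "\<And>V. \<lbrakk>openin X V; V \<noteq> {}; \<forall>p. V \<subseteq> X closure_of (Y \<inter> T p)\<rbrakk> \<Longrightarrow> \<exists>n. V \<inter> BY n \<inter> T n \<noteq> {}"
    and hitZ: "\<And>V. \<lbrakk>openin X V; V \<noteq> {}; \<forall>p. V \<subseteq> X closure_of (Z \<inter> T p)\<rbrakk> \<Longrightarrow> \<exists>n. V \<inter> BZ n \<inter> T n \<noteq> {}"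
    and U: "openin X U" "U \<noteq> {}"
  shows "\<exists>n. U \<inter> (BY n \<union> BZ n) \<inter> T n \<noteq> {}"
proof -
  obtain V where V: "openin X V" "V \<noteq> {}" "V \<subseteq> U"
    and side: "(\<forall>p. V \<subseteq> X closure_of (Y \<inter> T p)) \<or> (\<forall>p. V \<subseteq> X closure_of (Z \<inter> T p))"
    using openin_contains_openin_in_closures_of_one_side[OF cover dec dense U] .
  from side obtain n where "V \<inter> (BY n \<union> BZ n) \<inter> T n \<noteq> {}"
  proof
    assume "\<forall>p. V \<subseteq> X closure_of (Y \<inter> T p)"
    then obtain n where "V \<inter> BY n \<inter> T n \<noteq> {}" using hitY[OF V(1,2)] by blast
    then show thesis using that[of n] by blast
  next
    assume "\<forall>p. V \<subseteq> X closure_of (Z \<inter> T p)"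
    then obtain n where "V \<inter> BZ n \<inter> T n \<noteq> {}" using hitZ[OF V(1,2)] by blast
    then show thesis using that[of n] by blast
  qed
  then show ?thesis
    using V(3) by blast
qed

lemma A_separable_if_tail_traces:
  fixes \<AA> :: "'a topology \<Rightarrow> 'a set set"
  assumes ideal: "is_ideal_on X (\<AA> X)"
    and traces: "\<And>D :: nat \<Rightarrow> 'a set. (\<And>n. dense_in X (D n)) \<Longrightarrow> \<exists>B. (\<forall>n. B n \<in> \<AA> X) \<and>
      (\<forall>U. openin X U \<and> U \<noteq> {} \<longrightarrow> (\<exists>n. U \<inter> B n \<inter> (\<Union>m\<in>{n..}. D m) \<noteq> {}))"
  shows "A_separable \<AA> X"
  unfolding A_separable_def
proof (intro allI impI)
  fix D :: "nat \<Rightarrow> 'a set"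
  assume D: "\<forall>n. dense_in X (D n)"
  obtain B where B: "\<forall>n. B n \<in> \<AA> X"
    and meets: "\<forall>U. openin X U \<and> U \<noteq> {} \<longrightarrow> (\<exists>n. U \<inter> B n \<inter> (\<Union>m\<in>{n..}. D m) \<noteq> {})"
    using traces[of D] D by auto
  define A where "A m = (\<Union>k\<le>m. B k) \<inter> D m" for m
  have A_sub: "A m \<subseteq> D m" for m
    unfolding A_def by blast
  have A_in: "A m \<in> \<AA> X" for m
  proof -
    have "(\<Union>k\<le>m. B k) \<in> \<AA> X"
      using B by (intro is_ideal_on_finite_UN[OF ideal]) auto
    then show ?thesis
      using ideal unfolding A_def is_ideal_on_def by blast
  qed
  have "(\<Union>m. A m) \<inter> U \<noteq> {}" if U: "openin X U" "U \<noteq> {}" for U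
  proof -
    obtain n where "U \<inter> B n \<inter> (\<Union>m\<in>{n..}. D m) \<noteq> {}"
      using meets U by blast
    then obtain m y where y: "y \<in> U" "y \<in> B n" "n \<le> m" "y \<in> D m"
      by auto
    then have "y \<in> A m"
      unfolding A_def by auto
    with y(1) show ?thesis by blast
  qed
  then have "X closure_of (\<Union>m. A m) = topspace X"
    by (simp add: dense_intersects_open)
  moreover have "(\<Union>m. A m) \<subseteq> topspace X"
    using A_sub D unfolding dense_in_def by blast
  ultimately show "\<exists>A. (\<forall>n. A n \<subseteq> D n \<and> A n \<in> \<AA> X) \<and> dense_in X (\<Union>n. A n)"
    using A_sub A_in unfolding dense_in_def by blast
qed

theorem theorem3p13:
  fixes \<AA> :: "'a topology \<Rightarrow> 'a set set"
    and X :: "'a topology" and Y Z :: "'a set"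
  assumes ideal: "\<And>T. is_ideal_on T (\<AA> T)"
    and mono_sub: "\<And>T S. S \<subseteq> topspace T \<Longrightarrow> \<AA> (subtopology T S) \<subseteq> \<AA> T"
    and open_sub: "\<And>T U. openin T U \<Longrightarrow> \<AA> (subtopology T U) = (\<lambda>A. A \<inter> U) ` \<AA> T"
    and XYZ: "topspace X = Y \<union> Z"
    and sepY: "A_separable \<AA> (subtopology X Y)"
    and sepZ: "A_separable \<AA> (subtopology X Z)"
  shows "A_separable \<AA> X"
proof (rule A_separable_if_tail_traces[OF ideal])
  fix D :: "nat \<Rightarrow> 'a set"
  assume D: "\<And>n. dense_in X (D n)"
  define T where "T n = (\<Union>m\<in>{n..}. D m)" for n
  have dec: "decseq T"
    unfolding decseq_def T_def by (intro allI impI UN_mono) auto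
  have dense: "X closure_of T n = topspace X" for n
    unfolding T_def using dense_in_closure_of_tail[OF D] .
  have YX: "Y \<subseteq> topspace X" and ZX: "Z \<subseteq> topspace X"
    using XYZ by auto
  obtain BY where BY: "\<And>n. BY n \<in> \<AA> (subtopology X Y)"
    and hitY: "\<And>V. \<lbrakk>openin X V; V \<noteq> {}; \<forall>p. V \<subseteq> X closure_of (Y \<inter> T p)\<rbrakk> \<Longrightarrow> \<exists>n. V \<inter> BY n \<inter> T n \<noteq> {}"
    using A_separable_subtopology_traces[OF sepY YX, where T = T] by metis
  obtain BZ where BZ: "\<And>n. BZ n \<in> \<AA> (subtopology X Z)"
    and hitZ: "\<And>V. \<lbrakk>openin X V; V \<noteq> {}; \<forall>p. V \<subseteq> X closure_of (Z \<inter> T p)\<rbrakk> \<Longrightarrow> \<exists>n. V \<inter> BZ n \<inter> T n \<noteq> {}"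
    using A_separable_subtopology_traces[OF sepZ ZX, where T = T] by metis
  show "\<exists>B. (\<forall>n. B n \<in> \<AA> X) \<and>
      (\<forall>U. openin X U \<and> U \<noteq> {} \<longrightarrow> (\<exists>n. U \<inter> B n \<inter> (\<Union>m\<in>{n..}. D m) \<noteq> {}))"
  proof (intro exI[of _ "\<lambda>n. BY n \<union> BZ n"] conjI allI impI)
    fix n
    have "BY n \<in> \<AA> X" "BZ n \<in> \<AA> X"
      using subsetD[OF mono_sub[OF YX] BY] subsetD[OF mono_sub[OF ZX] BZ] .
    then show "BY n \<union> BZ n \<in> \<AA> X"
      using ideal[of X] unfolding is_ideal_on_def by blast
  next
    fix U
    assume "openin X U \<and> U \<noteq> {}"
    then show "\<exists>n. U \<inter> (BY n \<union> BZ n) \<inter> (\<Union>m\<in>{n..}. D m) \<noteq> {}"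
      using openin_meets_traces_of_cover[OF XYZ dec dense hitY hitZ] unfolding T_def by blast
  qed
qed

end
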